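(* The functor $H\colon\mathrm{SPP}\to\mathrm{EEED}$ is well defined and gives an equivalence from $\mathrm{SPP}$ to the full subcategory $\{M\in\mathrm{EEED}:\eta=0\}$ of exact extended $\eta$-diagrams whose map $\eta$ is zero.
   Context: For an abelian group $U$, $U[2]=\{u:2u=0\}$, $U/2=U/2U$, and $\bar c=c+2C$. An extended $\eta$-diagram is a diagram of abelian groups $B\xrightarrow{\psi}A\xrightarrow{\eta}C\xrightarrow{\chi}B$ with $2\eta=0$, $\psi\chi=0$, $\chi\eta\psi=2\cdot1_B$; morphisms are triples $(f\colon A\to A',g\colon B\to B',h\colon C\to C')$ commuting with $\psi,\eta,\chi$. It is exact if the induced sequence $C/2\xrightarrow{\chi}B\xrightarrow{\psi}A[2]$ is short exact; $\mathrm{EEED}$ is the category of these. The category $\mathrm{SPP}$ has objects pairs $(A,C)$ of abelian groups; morphisms $(A_0,C_0)\to(A_1,C_1)$ are triples $(f,h,u)$ with $f\colon A_0\to A_1$, $h\colon C_0\to C_1$, $u\colon A_0[2]\to C_1/2$; identities are $(1,1,0)$ and the composite of $(f_0,h_0,u_0)$ followed by $(f_1,h_1,u_1)$ is $(f_1f_0,h_1h_0,h_1\circ u_0+u_1\circ f_0)$. The functor $H$ sends $(A,C)$ to the diagram $C/2\oplus A[2]\xrightarrow{\psi}A\xrightarrow{0}C\xrightarrow{\chi}C/2\oplus A[2]$ with $\psi(\bar c,a)=a$ and $\chi(c)=(\bar c,0)$, and sends $(f,h,u)$ to the morphism $(f,g,h)$ where $g(\bar c_0,a_0)=(\overline{h(c_0)}+u(a_0),f(a_0))$.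 *)

theory Defs
  imports "HOL-Algebra.Algebra"
begin

text \<open>Abelian groups are rendered as HOL-Algebra commutative groups (written multiplicatively:
  the group law is \<open>\<otimes>\<close>, zero is \<open>\<one>\<close>, and \<open>2u\<close> is \<open>u \<otimes> u\<close>).  Homomorphisms are
  HOL-Algebra homomorphisms; equality of homomorphisms means equality on the carrier.\<close>

definition two_tors :: "('a,'m) monoid_scheme \<Rightarrow> 'a set" where
  "two_tors G = {x \<in> carrier G. x \<otimes>\<^bsub>G\<^esub> x = \<one>\<^bsub>G\<^esub>}"

definition tors2 :: "('a,'m) monoid_scheme \<Rightarrow> 'a monoid" where
  "tors2 G = \<lparr>carrier = two_tors G, monoid.mult = monoid.mult G, one = \<one>\<^bsub>G\<^esub>\<rparr>"

definition twice :: "('a,'m) monoid_scheme \<Rightarrow> 'a set" where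
  "twice G = {x \<otimes>\<^bsub>G\<^esub> x | x. x \<in> carrier G}"

definition mod2 :: "('a,'m) monoid_scheme \<Rightarrow> 'a set monoid" where
  "mod2 G = G Mod twice G"

definition cls :: "('a,'m) monoid_scheme \<Rightarrow> 'a \<Rightarrow> 'a set" where
  "cls G c = twice G #>\<^bsub>G\<^esub> c"

definition mod2_map :: "('c,'m) monoid_scheme \<Rightarrow> ('d,'n) monoid_scheme \<Rightarrow> ('c \<Rightarrow> 'd) \<Rightarrow> 'c set \<Rightarrow> 'd set" where
  "mod2_map C D h Y = twice D <#>\<^bsub>D\<^esub> (h ` Y)"

record ('a,'b,'c) eed =
  dA :: "'a monoid"
  dB :: "'b monoid"
  dC :: "'c monoid"
  psi :: "'b \<Rightarrow> 'a"
  eta :: "'a \<Rightarrow> 'c"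
  chi :: "'c \<Rightarrow> 'b"

definition ext_eta_diagram :: "('a,'b,'c,'z) eed_scheme \<Rightarrow> bool" where
  "ext_eta_diagram D \<longleftrightarrow>
     comm_group (dA D) \<and> comm_group (dB D) \<and> comm_group (dC D) \<and>
     psi D \<in> hom (dB D) (dA D) \<and> eta D \<in> hom (dA D) (dC D) \<and> chi D \<in> hom (dC D) (dB D) \<and>
     (\<forall>a \<in> carrier (dA D). eta D a \<otimes>\<^bsub>dC D\<^esub> eta D a = \<one>\<^bsub>dC D\<^esub>) \<and>
     (\<forall>c \<in> carrier (dC D). psi D (chi D c) = \<one>\<^bsub>dA D\<^esub>) \<and>
     (\<forall>b \<in> carrier (dB D). chi D (eta D (psi D b)) = b \<otimes>\<^bsub>dB D\<^esub> b)"

text \<open>Exactness: the induced sequence \<open>C/2 \<rightarrow> B \<rightarrow> A[2]\<close> (\<open>\<bar>c \<mapsto> \<chi> c\<close>, \<open>b \<mapsto> \<psi> b\<close>; these maps are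
  well defined for every extended eta-diagram) is short exact: the induced map on \<open>C/2\<close> is
  injective, its image is the kernel of \<open>\<psi>\<close>, and \<open>\<psi>\<close> maps \<open>B\<close> onto \<open>A[2]\<close>.\<close>
definition exact_eed :: "('a,'b,'c,'z) eed_scheme \<Rightarrow> bool" where
  "exact_eed D \<longleftrightarrow> ext_eta_diagram D \<and>
     (\<forall>c \<in> carrier (dC D). chi D c = \<one>\<^bsub>dB D\<^esub> \<longrightarrow> c \<in> twice (dC D)) \<and>
     chi D ` carrier (dC D) = {b \<in> carrier (dB D). psi D b = \<one>\<^bsub>dA D\<^esub>} \<and>
     psi D ` carrier (dB D) = two_tors (dA D)"

definition eed_mor ::
  "('a,'b,'c,'z) eed_scheme \<Rightarrow> ('a1,'b1,'c1,'z1) eed_scheme \<Rightarrow>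
     ('a \<Rightarrow> 'a1) \<times> ('b \<Rightarrow> 'b1) \<times> ('c \<Rightarrow> 'c1) \<Rightarrow> bool" where
  "eed_mor D D' m \<longleftrightarrow> (case m of (f, g, h) \<Rightarrow>
     f \<in> hom (dA D) (dA D') \<and> g \<in> hom (dB D) (dB D') \<and> h \<in> hom (dC D) (dC D') \<and>
     (\<forall>b \<in> carrier (dB D). f (psi D b) = psi D' (g b)) \<and>
     (\<forall>a \<in> carrier (dA D). h (eta D a) = eta D' (f a)) \<and>
     (\<forall>c \<in> carrier (dC D). g (chi D c) = chi D' (h c)))"

definition eed_mor_eq ::
  "('a,'b,'c,'z) eed_scheme \<Rightarrow> ('a \<Rightarrow> 'a1) \<times> ('b \<Rightarrow> 'b1) \<times> ('c \<Rightarrow> 'c1) \<Rightarrow>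
     ('a \<Rightarrow> 'a1) \<times> ('b \<Rightarrow> 'b1) \<times> ('c \<Rightarrow> 'c1) \<Rightarrow> bool" where
  "eed_mor_eq D m m' \<longleftrightarrow> (case m of (f, g, h) \<Rightarrow> case m' of (f', g', h') \<Rightarrow>
     (\<forall>a \<in> carrier (dA D). f a = f' a) \<and> (\<forall>b \<in> carrier (dB D). g b = g' b) \<and>
     (\<forall>c \<in> carrier (dC D). h c = h' c))"

definition eed_id :: "('a \<Rightarrow> 'a) \<times> ('b \<Rightarrow> 'b) \<times> ('c \<Rightarrow> 'c)" where
  "eed_id = (id, id, id)"

definition eed_comp ::
  "('a \<Rightarrow> 'a1) \<times> ('b \<Rightarrow> 'b1) \<times> ('c \<Rightarrow> 'c1) \<Rightarrow> ('a1 \<Rightarrow> 'a2) \<times> ('b1 \<Rightarrow> 'b2) \<times> ('c1 \<Rightarrow> 'c2) \<Rightarrow>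
     ('a \<Rightarrow> 'a2) \<times> ('b \<Rightarrow> 'b2) \<times> ('c \<Rightarrow> 'c2)" where
  "eed_comp m m' = (case m of (f, g, h) \<Rightarrow> case m' of (f', g', h') \<Rightarrow> (f' \<circ> f, g' \<circ> g, h' \<circ> h))"

definition spp_obj :: "('a,'m) monoid_scheme \<Rightarrow> ('c,'n) monoid_scheme \<Rightarrow> bool" where
  "spp_obj A C \<longleftrightarrow> comm_group A \<and> comm_group C"

definition spp_mor ::
  "'a monoid \<Rightarrow> 'c monoid \<Rightarrow> 'a1 monoid \<Rightarrow> 'c1 monoid \<Rightarrow>
     ('a \<Rightarrow> 'a1) \<times> ('c \<Rightarrow> 'c1) \<times> ('a \<Rightarrow> 'c1 set) \<Rightarrow> bool" where
  "spp_mor A0 C0 A1 C1 m \<longleftrightarrow> (case m of (f, h, u) \<Rightarrow>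
     f \<in> hom A0 A1 \<and> h \<in> hom C0 C1 \<and> u \<in> hom (tors2 A0) (mod2 C1))"

definition spp_mor_eq ::
  "'a monoid \<Rightarrow> 'c monoid \<Rightarrow>
     ('a \<Rightarrow> 'a1) \<times> ('c \<Rightarrow> 'c1) \<times> ('a \<Rightarrow> 'c1 set) \<Rightarrow>
     ('a \<Rightarrow> 'a1) \<times> ('c \<Rightarrow> 'c1) \<times> ('a \<Rightarrow> 'c1 set) \<Rightarrow> bool" where
  "spp_mor_eq A0 C0 m m' \<longleftrightarrow> (case m of (f, h, u) \<Rightarrow> case m' of (f', h', u') \<Rightarrow>
     (\<forall>a \<in> carrier A0. f a = f' a) \<and> (\<forall>c \<in> carrier C0. h c = h' c) \<and>
     (\<forall>a \<in> two_tors A0. u a = u' a))"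

definition spp_id :: "'a monoid \<Rightarrow> 'c monoid \<Rightarrow> ('a \<Rightarrow> 'a) \<times> ('c \<Rightarrow> 'c) \<times> ('a \<Rightarrow> 'c set)" where
  "spp_id A C = (id, id, \<lambda>a. \<one>\<^bsub>mod2 C\<^esub>)"

definition spp_comp ::
  "'c1 monoid \<Rightarrow> 'c2 monoid \<Rightarrow>
     ('a \<Rightarrow> 'a1) \<times> ('c \<Rightarrow> 'c1) \<times> ('a \<Rightarrow> 'c1 set) \<Rightarrow>
     ('a1 \<Rightarrow> 'a2) \<times> ('c1 \<Rightarrow> 'c2) \<times> ('a1 \<Rightarrow> 'c2 set) \<Rightarrow>
     ('a \<Rightarrow> 'a2) \<times> ('c \<Rightarrow> 'c2) \<times> ('a \<Rightarrow> 'c2 set)" where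
  "spp_comp C1 C2 m0 m1 = (case m0 of (f0, h0, u0) \<Rightarrow> case m1 of (f1, h1, u1) \<Rightarrow>
     (f1 \<circ> f0, h1 \<circ> h0,
      \<lambda>a. mod2_map C1 C2 h1 (u0 a) \<otimes>\<^bsub>mod2 C2\<^esub> u1 (f0 a)))"

definition H_obj :: "'a monoid \<Rightarrow> 'c monoid \<Rightarrow> ('a, 'c set \<times> 'a, 'c) eed" where
  "H_obj A C = \<lparr> dA = A, dB = mod2 C \<times>\<times> tors2 A, dC = C,
      psi = (\<lambda>(x, a). a), eta = (\<lambda>a. \<one>\<^bsub>C\<^esub>), chi = (\<lambda>c. (cls C c, \<one>\<^bsub>A\<^esub>)) \<rparr>"

definition H_mor ::
  "'c monoid \<Rightarrow> 'c1 monoid \<Rightarrow> ('a \<Rightarrow> 'a1) \<times> ('c \<Rightarrow> 'c1) \<times> ('a \<Rightarrow> 'c1 set) \<Rightarrow>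
     ('a \<Rightarrow> 'a1) \<times> ('c set \<times> 'a \<Rightarrow> 'c1 set \<times> 'a1) \<times> ('c \<Rightarrow> 'c1)" where
  "H_mor C0 C1 m = (case m of (f, h, u) \<Rightarrow>
     (f, \<lambda>(x, a). (mod2_map C0 C1 h x \<otimes>\<^bsub>mod2 C1\<^esub> u a, f a), h))"

end

theory Submission
  imports Defs
begin

text \<open>In a morphism \<open>(f, g, h)\<close> between two
  such diagrams, compatibility with \<open>\<psi>\<close> and \<open>\<chi>\<close> forces
  \<open>g([c], a) = ([h c] + u a, f a)\<close> (with \<open>[c]\<close> the class of \<open>c\<close> in \<open>C/2\<close>), where \<open>u : A\<^sub>0[2] \<rightarrow> C\<^sub>1/2\<close> is the remaining component
  of \<open>g\<close>; this is exactly an SPP morphism \<open>(f, h, u)\<close>, so \<open>H\<close> is full and faithful.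
  For essential surjectivity, \<open>\<chi>\<eta>\<psi> = 2\<close> and \<open>\<eta> = 0\<close> give \<open>2B = 0\<close>.  In a group of exponent 2
  every subgroup has a complement (Zorn's lemma), so \<open>\<psi> : B \<rightarrow> A[2]\<close> has a homomorphic section
  \<open>s\<close>, and \<open>([c], a) \<mapsto> \<chi> c + s a\<close> is an isomorphism \<open>C/2 \<oplus> A[2] \<rightarrow> B\<close> compatible with
  \<open>\<psi>\<close> and \<open>\<chi>\<close>, i.e. an isomorphism \<open>H(A, C) \<cong> D\<close>.\<close>

section \<open>Reduction modulo 2 and 2-torsion\<close>

lemma carrier_tors2 [simp]: "carrier (tors2 G) = two_tors G"
  and one_tors2 [simp]: "\<one>\<^bsub>tors2 G\<^esub> = \<one>\<^bsub>G\<^esub>"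
  and mult_tors2 [simp]: "x \<otimes>\<^bsub>tors2 G\<^esub> y = x \<otimes>\<^bsub>G\<^esub> y"
  by (simp_all add: tors2_def)

lemma carrier_mod2: "carrier (mod2 G) = rcosets\<^bsub>G\<^esub> (twice G)"
  and one_mod2: "\<one>\<^bsub>mod2 G\<^esub> = twice G"
  by (simp_all add: mod2_def FactGroup_def)

lemma mod2_cases:
  assumes "x \<in> carrier (mod2 G)"
  obtains c where "c \<in> carrier G" "x = cls G c"
  using assms by (auto simp: carrier_mod2 cls_def RCOSETS_def)

lemma hom_fst_DirProd: "fst \<in> hom (G \<times>\<times> H) G"
  and hom_snd_DirProd: "snd \<in> hom (G \<times>\<times> H) H"
  by (auto simp: hom_def)

lemma DirProd_comm_group:
  assumes "comm_group G" "comm_group H"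
  shows "comm_group (G \<times>\<times> H)"
proof -
  interpret G: comm_group G by fact
  interpret H: comm_group H by fact
  show ?thesis
    by (rule group.group_comm_groupI[OF DirProd_group[OF G.is_group H.is_group]])
       (auto simp: G.m_comm H.m_comm)
qed

context comm_group
begin

lemma twice_subgroup: "subgroup (twice G) G"
proof
  show "twice G \<subseteq> carrier G" "\<one> \<in> twice G"
    by (auto simp: twice_def intro!: exI[of _ \<one>])
next
  fix x y assume "x \<in> twice G" "y \<in> twice G"
  then obtain a b where "a \<in> carrier G" "b \<in> carrier G" "x = a \<otimes> a" "y = b \<otimes> b"
    by (auto simp: twice_def)
  then have "x \<otimes> y = (a \<otimes> b) \<otimes> (a \<otimes> b)" "a \<otimes> b \<in> carrier G" by (simp_all add: m_ac)
  then show "x \<otimes> y \<in> twice G" by (auto simp: twice_def)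
next
  fix x assume "x \<in> twice G"
  then obtain a where "a \<in> carrier G" "x = a \<otimes> a" by (auto simp: twice_def)
  then have "inv x = inv a \<otimes> inv a" "inv a \<in> carrier G" by (simp_all add: inv_mult)
  then show "inv x \<in> twice G" by (auto simp: twice_def)
qed

lemma square_in_twice: "x \<in> carrier G \<Longrightarrow> x \<otimes> x \<in> twice G"
  by (auto simp: twice_def)

lemma mod2_comm_group: "comm_group (mod2 G)"
  unfolding mod2_def by (simp add: abelian_FactGroup twice_subgroup)

lemma cls_hom: "cls G \<in> hom G (mod2 G)"
  unfolding mod2_def cls_def[abs_def]
  by (rule normal.r_coset_hom_Mod) (simp add: subgroup_imp_normal twice_subgroup)

lemma cls_carrier: "c \<in> carrier G \<Longrightarrow> cls G c \<in> carrier (mod2 G)"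
  using cls_hom by (rule hom_in_carrier)

lemma cls_mult: "c \<in> carrier G \<Longrightarrow> d \<in> carrier G \<Longrightarrow> cls G (c \<otimes> d) = cls G c \<otimes>\<^bsub>mod2 G\<^esub> cls G d"
  using cls_hom by (rule hom_mult)

lemma cls_one: "cls G \<one> = \<one>\<^bsub>mod2 G\<^esub>"
  using hom_one[OF cls_hom is_group comm_group.axioms(2)[OF mod2_comm_group]] .

lemma cls_eq_one_iff:
  assumes "c \<in> carrier G"
  shows "cls G c = \<one>\<^bsub>mod2 G\<^esub> \<longleftrightarrow> c \<in> twice G"
proof
  assume "cls G c = \<one>\<^bsub>mod2 G\<^esub>"
  moreover have "c \<in> twice G #> c" using rcos_self[OF assms twice_subgroup] .
  ultimately show "c \<in> twice G" by (simp add: cls_def one_mod2)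
qed (simp add: cls_def one_mod2 subgroup.rcos_const[OF twice_subgroup is_group])

lemma mod2_square: "x \<in> carrier (mod2 G) \<Longrightarrow> x \<otimes>\<^bsub>mod2 G\<^esub> x = \<one>\<^bsub>mod2 G\<^esub>"
  by (erule mod2_cases) (simp add: cls_mult[symmetric] cls_eq_one_iff square_in_twice)

lemma two_tors_mult:
  assumes "x \<in> two_tors G" "y \<in> two_tors G"
  shows "x \<otimes> y \<in> two_tors G"
proof -
  have "x \<in> carrier G" "y \<in> carrier G" using assms by (auto simp: two_tors_def)
  then have "(x \<otimes> y) \<otimes> (x \<otimes> y) = (x \<otimes> x) \<otimes> (y \<otimes> y)" by (simp add: m_ac)
  with assms show ?thesis by (auto simp: two_tors_def)
qed

lemma tors2_comm_group: "comm_group (tors2 G)"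
proof (rule comm_groupI)
  fix x y z assume "x \<in> carrier (tors2 G)" "y \<in> carrier (tors2 G)" "z \<in> carrier (tors2 G)"
  then have "x \<in> two_tors G" "y \<in> two_tors G" and c: "x \<in> carrier G" "y \<in> carrier G" "z \<in> carrier G"
    by (auto simp: two_tors_def)
  then show "x \<otimes>\<^bsub>tors2 G\<^esub> y \<in> carrier (tors2 G)"
    and "x \<otimes>\<^bsub>tors2 G\<^esub> y \<otimes>\<^bsub>tors2 G\<^esub> z = x \<otimes>\<^bsub>tors2 G\<^esub> (y \<otimes>\<^bsub>tors2 G\<^esub> z)"
    by (simp_all add: two_tors_mult m_assoc)
  show "x \<otimes>\<^bsub>tors2 G\<^esub> y = y \<otimes>\<^bsub>tors2 G\<^esub> x" using c by (simp add: m_comm)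
next
  fix x assume "x \<in> carrier (tors2 G)"
  then show "\<one>\<^bsub>tors2 G\<^esub> \<otimes>\<^bsub>tors2 G\<^esub> x = x"
    and "\<exists>y\<in>carrier (tors2 G). y \<otimes>\<^bsub>tors2 G\<^esub> x = \<one>\<^bsub>tors2 G\<^esub>"
    by (auto simp: two_tors_def)
qed (simp add: two_tors_def)

end

lemma hom_two_tors:
  assumes "group G" "group H" "f \<in> hom G H" "a \<in> two_tors G"
  shows "f a \<in> two_tors H"
proof -
  have a: "a \<in> carrier G" "a \<otimes>\<^bsub>G\<^esub> a = \<one>\<^bsub>G\<^esub>" using assms(4) by (auto simp: two_tors_def)
  then have "f a \<otimes>\<^bsub>H\<^esub> f a = f \<one>\<^bsub>G\<^esub>" using hom_mult[OF assms(3)] by metis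
  then show ?thesis using a hom_one[OF assms(3,1,2)] hom_in_carrier[OF assms(3)] by (simp add: two_tors_def)
qed

lemma mod2_map_cls:
  assumes "comm_group C" "comm_group D" and h: "h \<in> hom C D" and c: "c \<in> carrier C"
  shows "mod2_map C D h (cls C c) = cls D (h c)"
proof -
  interpret C: comm_group C by fact
  interpret D: comm_group D by fact
  have h_twice: "h t \<in> twice D" if "t \<in> twice C" for t
    using that hom_mult[OF h] hom_in_carrier[OF h] by (auto simp: twice_def)
  have twice_C: "t \<in> carrier C" if "t \<in> twice C" for t
    using that by (auto simp: twice_def)
  show ?thesis
  proof (intro equalityI subsetI)
    fix w assume "w \<in> mod2_map C D h (cls C c)"
    then obtain y t where yt: "y \<in> twice D" "t \<in> twice C" and w: "w = y \<otimes>\<^bsub>D\<^esub> h (t \<otimes>\<^bsub>C\<^esub> c)"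
      unfolding mod2_map_def cls_def set_mult_def r_coset_def by blast
    have "w = (y \<otimes>\<^bsub>D\<^esub> h t) \<otimes>\<^bsub>D\<^esub> h c"
      using yt c twice_C h_twice hom_in_carrier[OF h] D.twice_subgroup
      by (simp add: w hom_mult[OF h] D.m_assoc subgroup.mem_carrier)
    moreover have "y \<otimes>\<^bsub>D\<^esub> h t \<in> twice D"
      using yt h_twice subgroup.m_closed[OF D.twice_subgroup] by blast
    ultimately show "w \<in> cls D (h c)" unfolding cls_def r_coset_def by blast
  next
    fix w assume "w \<in> cls D (h c)"
    then obtain y where "y \<in> twice D" "w = y \<otimes>\<^bsub>D\<^esub> h (\<one>\<^bsub>C\<^esub> \<otimes>\<^bsub>C\<^esub> c)"
      using c unfolding cls_def r_coset_def by auto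
    moreover have "\<one>\<^bsub>C\<^esub> \<in> twice C" using subgroup.one_closed[OF C.twice_subgroup] .
    ultimately show "w \<in> mod2_map C D h (cls C c)"
      unfolding mod2_map_def cls_def set_mult_def r_coset_def by blast
  qed
qed

lemma mod2_map_hom:
  assumes C: "comm_group C" and D: "comm_group D" and h: "h \<in> hom C D"
  shows "mod2_map C D h \<in> hom (mod2 C) (mod2 D)"
proof (rule homI)
  interpret C: comm_group C by fact
  interpret D: comm_group D by fact
  fix x y assume "x \<in> carrier (mod2 C)" "y \<in> carrier (mod2 C)"
  then obtain c d where "c \<in> carrier C" "d \<in> carrier C" "x = cls C c" "y = cls C d"
    by (metis mod2_cases)
  then show "mod2_map C D h x \<in> carrier (mod2 D)"
    and "mod2_map C D h (x \<otimes>\<^bsub>mod2 C\<^esub> y) = mod2_map C D h x \<otimes>\<^bsub>mod2 D\<^esub> mod2_map C D h y"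
    using mod2_map_cls[OF C D h] hom_in_carrier[OF h] D.cls_carrier
    by (simp_all add: C.cls_mult[symmetric] D.cls_mult[symmetric] hom_mult[OF h])
qed

lemma mod2_map_comp:
  assumes "comm_group C0" "comm_group C1" "comm_group C2"
    and h0: "h0 \<in> hom C0 C1" and h1: "h1 \<in> hom C1 C2" and x: "x \<in> carrier (mod2 C0)"
  shows "mod2_map C1 C2 h1 (mod2_map C0 C1 h0 x) = mod2_map C0 C2 (h1 \<circ> h0) x"
  using x
proof (rule mod2_cases)
  fix c assume "c \<in> carrier C0" "x = cls C0 c"
  then show ?thesis
    using assms mod2_map_cls hom_compose[OF h0 h1] hom_in_carrier[OF h0] by (metis comp_apply)
qed

lemma mod2_map_id:
  assumes "comm_group C" "x \<in> carrier (mod2 C)"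
  shows "mod2_map C C id x = x"
  using assms(2)
proof (rule mod2_cases)
  fix c assume "c \<in> carrier C" "x = cls C c"
  then show ?thesis using mod2_map_cls[OF assms(1,1) iso_imp_homomorphism[OF id_iso]] by simp
qed

definition mod2_lift :: "('c \<Rightarrow> 'b) \<Rightarrow> 'c set \<Rightarrow> 'b" where
  "mod2_lift h x = h (SOME c. c \<in> x)"

lemma mod2_lift_cls:
  assumes "comm_group C" "group B" and h: "h \<in> hom C B" and h_twice: "\<forall>t\<in>twice C. h t = \<one>\<^bsub>B\<^esub>"
    and c: "c \<in> carrier C"
  shows "mod2_lift h (cls C c) = h c"
proof -
  interpret C: comm_group C by fact
  interpret B: group B by fact
  have "c \<in> cls C c" unfolding cls_def using C.rcos_self[OF c C.twice_subgroup] .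
  then have "(SOME d. d \<in> cls C c) \<in> cls C c" by (rule someI)
  then obtain t where t: "t \<in> twice C" "(SOME d. d \<in> cls C c) = t \<otimes>\<^bsub>C\<^esub> c"
    unfolding cls_def r_coset_def by blast
  then have "t \<in> carrier C" by (simp add: subgroup.mem_carrier[OF C.twice_subgroup])
  then show ?thesis
    using t c h_twice hom_in_carrier[OF h] by (simp add: mod2_lift_def hom_mult[OF h])
qed

lemma mod2_lift_hom:
  assumes C: "comm_group C" and B: "group B" and h: "h \<in> hom C B"
    and h_twice: "\<forall>t\<in>twice C. h t = \<one>\<^bsub>B\<^esub>"
  shows "mod2_lift h \<in> hom (mod2 C) B"
proof (rule homI)
  interpret C: comm_group C by fact
  fix x y assume "x \<in> carrier (mod2 C)" "y \<in> carrier (mod2 C)"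
  then obtain c d where "c \<in> carrier C" "d \<in> carrier C" "x = cls C c" "y = cls C d"
    by (metis mod2_cases)
  then show "mod2_lift h x \<in> carrier B" "mod2_lift h (x \<otimes>\<^bsub>mod2 C\<^esub> y) = mod2_lift h x \<otimes>\<^bsub>B\<^esub> mod2_lift h y"
    using mod2_lift_cls[OF C B h h_twice] hom_in_carrier[OF h]
    by (simp_all add: C.cls_mult[symmetric] hom_mult[OF h])
qed

section \<open>Complements in groups of exponent 2\<close>

lemma (in group) subgroup_Union_chain:
  assumes "\<C> \<noteq> {}" and chain: "subset.chain {K. subgroup K G} \<C>"
  shows "subgroup (\<Union>\<C>) G"
proof (rule subgroupI)
  have sub: "subgroup K G" if "K \<in> \<C>" for K
    using that chain by (auto simp: subset_chain_def)
  show "\<Union>\<C> \<subseteq> carrier G" using sub by (auto dest: subgroup.mem_carrier)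
  show "\<Union>\<C> \<noteq> {}" using assms(1) by (auto dest: sub subgroup.one_closed)
  show "inv a \<in> \<Union>\<C>" if "a \<in> \<Union>\<C>" for a
    using that by (auto dest: sub subgroup.m_inv_closed)
  show "a \<otimes> b \<in> \<Union>\<C>" if ab: "a \<in> \<Union>\<C>" "b \<in> \<Union>\<C>" for a b
  proof -
    obtain K L where KL: "K \<in> \<C>" "L \<in> \<C>" "a \<in> K" "b \<in> L" using ab by blast
    then have "K \<subseteq> L \<or> L \<subseteq> K" using chain by (auto simp: subset_chain_def)
    then have "a \<otimes> b \<in> K \<or> a \<otimes> b \<in> L"
      using KL subgroup.m_closed[OF sub[OF \<open>K \<in> \<C>\<close>]] subgroup.m_closed[OF sub[OF \<open>L \<in> \<C>\<close>]] by blast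
    then show ?thesis using KL by blast
  qed
qed

context comm_group
begin

lemma exponent2_subgroup_extend:
  assumes exp2: "\<And>x. x \<in> carrier G \<Longrightarrow> x \<otimes> x = \<one>" and K: "subgroup K G" and b: "b \<in> carrier G"
  shows "subgroup (K \<union> (K #> b)) G"
proof -
  interpret K: subgroup K G by fact
  have coset: "y \<in> K #> b \<longleftrightarrow> (\<exists>k\<in>K. y = k \<otimes> b)" for y
    by (auto simp: r_coset_def)
  show ?thesis
  proof (rule subgroupI)
    show "K \<union> (K #> b) \<subseteq> carrier G" by (simp add: K.subset r_coset_subset_G b)
    show "K \<union> (K #> b) \<noteq> {}" using K.one_closed by blast
    show "inv a \<in> K \<union> (K #> b)" if a: "a \<in> K \<union> (K #> b)" for a
    proof -
      have "a \<in> carrier G" using a K.subset r_coset_subset_G[OF K.subset b] by blast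
      then have "inv a = a" by (simp add: inv_equality exp2)
      then show ?thesis using a by simp
    qed
    show "x \<otimes> y \<in> K \<union> (K #> b)" if x: "x \<in> K \<union> (K #> b)" and y: "y \<in> K \<union> (K #> b)" for x y
    proof -
      consider "x \<in> K" "y \<in> K" | k where "x \<in> K" "k \<in> K" "y = k \<otimes> b"
        | k where "k \<in> K" "x = k \<otimes> b" "y \<in> K"
        | k k' where "k \<in> K" "k' \<in> K" "x = k \<otimes> b" "y = k' \<otimes> b"
        using x y by (auto simp: coset)
      then show ?thesis
      proof cases
        case (2 k)
        then have "x \<otimes> y = (x \<otimes> k) \<otimes> b" using b by (simp add: m_assoc)
        then show ?thesis using 2 by (auto simp: coset)
      next
        case (3 k)
        then have "x \<otimes> y = (k \<otimes> y) \<otimes> b" using b by (simp add: m_ac)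
        then show ?thesis using 3 by (auto simp: coset)
      next
        case (4 k k')
        then have "x \<otimes> y = (k \<otimes> k') \<otimes> (b \<otimes> b)" using b by (simp add: m_ac)
        then show ?thesis using 4 b exp2 by simp
      qed simp
    qed
  qed
qed

lemma exponent2_subgroup_complement:
  assumes exp2: "\<And>x. x \<in> carrier G \<Longrightarrow> x \<otimes> x = \<one>" and N: "subgroup N G"
  obtains K where "subgroup K G" "K \<inter> N = {\<one>}" "\<And>x. x \<in> carrier G \<Longrightarrow> \<exists>k\<in>K. \<exists>n\<in>N. x = k \<otimes> n"
proof -
  define \<K> where "\<K> = {K. subgroup K G \<and> K \<inter> N = {\<one>}}"
  have "\<exists>K\<in>\<K>. \<forall>L\<in>\<K>. K \<subseteq> L \<longrightarrow> L = K"
  proof (rule subset_Zorn_nonempty)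
    show "\<K> \<noteq> {}" using triv_subgroup subgroup.one_closed[OF N] unfolding \<K>_def by blast
    fix \<C> assume "\<C> \<noteq> {}" and chain: "subset.chain \<K> \<C>"
    then have sub: "\<C> \<subseteq> \<K>" by (simp add: subset_chain_def)
    have "subset.chain {K. subgroup K G} \<C>" using chain by (auto simp: subset_chain_def \<K>_def)
    with \<open>\<C> \<noteq> {}\<close> have "subgroup (\<Union>\<C>) G" by (rule subgroup_Union_chain)
    moreover have "\<Union>\<C> \<inter> N \<subseteq> {\<one>}" using sub by (auto simp: \<K>_def)
    moreover have "\<one> \<in> \<Union>\<C> \<inter> N"
      using subgroup.one_closed[OF N] subgroup.one_closed[OF calculation(1)] by blast
    ultimately show "\<Union>\<C> \<in> \<K>" unfolding \<K>_def by blast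
  qed
  then obtain K where "K \<in> \<K>" and max: "\<And>L. L \<in> \<K> \<Longrightarrow> K \<subseteq> L \<Longrightarrow> L = K"
    by blast
  then have K: "subgroup K G" "K \<inter> N = {\<one>}" by (simp_all add: \<K>_def)
  \<comment> \<open>if \<open>x \<notin> K N\<close>, then \<open>K \<union> K x\<close> would be a larger subgroup meeting \<open>N\<close> trivially\<close>
  have "\<exists>k\<in>K. \<exists>n\<in>N. x = k \<otimes> n" if x: "x \<in> carrier G" for x
  proof (rule ccontr)
    assume none: "\<not> (\<exists>k\<in>K. \<exists>n\<in>N. x = k \<otimes> n)"
    have "(K #> x) \<inter> N = {}"
    proof (intro equals0I)
      fix y assume "y \<in> (K #> x) \<inter> N"
      then obtain k where "k \<in> K" "y \<in> N" "y = k \<otimes> x" by (auto simp: r_coset_def)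
      moreover from this have "x = k \<otimes> y"
        using x exp2 subgroup.mem_carrier[OF K(1)] by (simp add: m_assoc[symmetric])
      ultimately show False using none by blast
    qed
    then have "K \<union> (K #> x) \<in> \<K>"
      using K exponent2_subgroup_extend[OF exp2 K(1) x] by (auto simp: \<K>_def)
    then have "K #> x \<subseteq> K" using max by blast
    moreover have "x \<in> K #> x" using rcos_self[OF x K(1)] .
    ultimately have "x \<in> K" by blast
    moreover have "x = x \<otimes> \<one>" using x by simp
    ultimately show False using none subgroup.one_closed[OF N] by blast
  qed
  with K show thesis by (rule that)
qed

lemma exponent2_epi_section:
  assumes exp2: "\<And>x. x \<in> carrier G \<Longrightarrow> x \<otimes> x = \<one>" and T: "group T"
    and p: "p \<in> hom G T" and onto: "p ` carrier G = carrier T"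
  obtains s where "s \<in> hom T G" "\<And>t. t \<in> carrier T \<Longrightarrow> p (s t) = t"
proof -
  interpret p: group_hom G T p by (simp add: group_hom_def group_hom_axioms_def T p is_group)
  obtain K where K: "subgroup K G" and K_ker: "K \<inter> kernel G T p = {\<one>}"
    and span: "\<And>x. x \<in> carrier G \<Longrightarrow> \<exists>k\<in>K. \<exists>n\<in>kernel G T p. x = k \<otimes> n"
    using exponent2_subgroup_complement[OF exp2 p.subgroup_kernel] by blast
  interpret K: subgroup K G by fact
  let ?GK = "G\<lparr>carrier := K\<rparr>"
  have "p \<in> hom ?GK T" using p by (auto simp: hom_def)
  moreover have "p ` K = carrier T"
  proof
    show "p ` K \<subseteq> carrier T" using onto by auto
    show "carrier T \<subseteq> p ` K"
    proof
      fix t assume "t \<in> carrier T"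
      then obtain x where x: "x \<in> carrier G" "t = p x" using onto by auto
      then obtain k n where "k \<in> K" "n \<in> kernel G T p" "x = k \<otimes> n" using span by blast
      then have "t = p k" using x by (simp add: kernel_def)
      then show "t \<in> p ` K" using \<open>k \<in> K\<close> by blast
    qed
  qed
  moreover have "inj_on p K"
  proof (rule inj_onI)
    fix k k' assume k: "k \<in> K" "k' \<in> K" "p k = p k'"
    then have "k \<otimes> inv k' \<in> K \<inter> kernel G T p" by (simp add: kernel_def)
    then have "k \<otimes> inv k' = \<one>" using K_ker by blast
    then show "k = k'" using k by (simp add: inv_solve_right')
  qed
  ultimately have "p \<in> iso ?GK T" by (simp add: iso_iff)
  then have "inv_into K p \<in> hom T ?GK"
    using group.iso_set_sym[OF K.subgroup_is_group[OF is_group]] iso_imp_homomorphism by fastforce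
  then have "inv_into K p \<in> hom T G" by (auto simp: hom_def dest: K.mem_carrier)
  moreover have "p (inv_into K p t) = t" if "t \<in> carrier T" for t
    using that \<open>p ` K = carrier T\<close> by (simp add: f_inv_into_f)
  ultimately show thesis by (rule that)
qed

end

section \<open>The functor \<open>H\<close>\<close>

lemma hom_tors2:
  assumes "group G" "group H" "f \<in> hom G H"
  shows "f \<in> hom (tors2 G) (tors2 H)"
proof (rule homI)
  fix x y assume "x \<in> carrier (tors2 G)" "y \<in> carrier (tors2 G)"
  then show "f x \<in> carrier (tors2 H)" "f (x \<otimes>\<^bsub>tors2 G\<^esub> y) = f x \<otimes>\<^bsub>tors2 H\<^esub> f y"
    using hom_two_tors[OF assms] hom_mult[OF assms(3)] by (simp_all add: two_tors_def)
qed

lemma H_obj_simps [simp]: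
  "dA (H_obj A C) = A" "dB (H_obj A C) = mod2 C \<times>\<times> tors2 A" "dC (H_obj A C) = C"
  "psi (H_obj A C) = (\<lambda>(x, a). a)" "eta (H_obj A C) = (\<lambda>a. \<one>\<^bsub>C\<^esub>)"
  "chi (H_obj A C) = (\<lambda>c. (cls C c, \<one>\<^bsub>A\<^esub>))"
  by (simp_all add: H_obj_def)

lemma H_mor_simp [simp]:
  "H_mor C0 C1 (f, h, u) = (f, \<lambda>(x, a). (mod2_map C0 C1 h x \<otimes>\<^bsub>mod2 C1\<^esub> u a, f a), h)"
  by (simp add: H_mor_def)

lemma exact_H_obj:
  assumes "spp_obj A C"
  shows "exact_eed (H_obj A C)"
proof -
  interpret A: comm_group A using assms by (simp add: spp_obj_def)
  interpret C: comm_group C using assms by (simp add: spp_obj_def)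
  interpret M: comm_group "mod2 C" by (rule C.mod2_comm_group)
  have B: "comm_group (mod2 C \<times>\<times> tors2 A)"
    by (rule DirProd_comm_group[OF C.mod2_comm_group A.tors2_comm_group])
  have psi: "(\<lambda>(x, a). a) \<in> hom (mod2 C \<times>\<times> tors2 A) A"
    by (auto simp: hom_def two_tors_def)
  have chi: "(\<lambda>c. (cls C c, \<one>\<^bsub>A\<^esub>)) \<in> hom C (mod2 C \<times>\<times> tors2 A)"
    using C.cls_hom trivial_hom[OF comm_group.axioms(2)[OF A.tors2_comm_group]]
    by (simp add: hom_paired)
  have square: "(cls C \<one>\<^bsub>C\<^esub>, \<one>\<^bsub>A\<^esub>) = b \<otimes>\<^bsub>mod2 C \<times>\<times> tors2 A\<^esub> b"
    if "b \<in> carrier (mod2 C \<times>\<times> tors2 A)" for b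
    using that C.mod2_square by (auto simp: C.cls_one two_tors_def)
  have "ext_eta_diagram (H_obj A C)"
    using A.comm_group_axioms B C.comm_group_axioms psi chi square
    by (simp add: ext_eta_diagram_def trivial_hom C.is_group)
  moreover have "{b \<in> carrier (mod2 C \<times>\<times> tors2 A). snd b = \<one>\<^bsub>A\<^esub>} \<subseteq> (\<lambda>c. (cls C c, \<one>\<^bsub>A\<^esub>)) ` carrier C"
    by (auto elim!: mod2_cases)
  moreover have "two_tors A \<subseteq> snd ` carrier (mod2 C \<times>\<times> tors2 A)"
    using M.one_closed by force
  ultimately show ?thesis
    using C.cls_carrier by (auto simp: exact_eed_def C.cls_eq_one_iff two_tors_def)
qed

lemma eed_mor_H_mor:
  assumes "spp_obj A0 C0" "spp_obj A1 C1" and m: "spp_mor A0 C0 A1 C1 (f, h, u)"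
  shows "eed_mor (H_obj A0 C0) (H_obj A1 C1) (H_mor C0 C1 (f, h, u))"
proof -
  interpret A0: comm_group A0 using assms by (simp add: spp_obj_def)
  interpret C0: comm_group C0 using assms by (simp add: spp_obj_def)
  interpret A1: comm_group A1 using assms by (simp add: spp_obj_def)
  interpret C1: comm_group C1 using assms by (simp add: spp_obj_def)
  interpret M1: comm_group "mod2 C1" by (rule C1.mod2_comm_group)
  have f: "f \<in> hom A0 A1" and h: "h \<in> hom C0 C1" and u: "u \<in> hom (tors2 A0) (mod2 C1)"
    using m by (auto simp: spp_mor_def)
  have "(\<lambda>b. mod2_map C0 C1 h (fst b)) \<in> hom (mod2 C0 \<times>\<times> tors2 A0) (mod2 C1)"
    using hom_compose[OF hom_fst_DirProd mod2_map_hom[OF C0.comm_group_axioms C1.comm_group_axioms h]]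
    by (simp add: comp_def)
  moreover have "(\<lambda>b. u (snd b)) \<in> hom (mod2 C0 \<times>\<times> tors2 A0) (mod2 C1)"
    using hom_compose[OF hom_snd_DirProd u] by (simp add: comp_def)
  ultimately have "(\<lambda>b. mod2_map C0 C1 h (fst b) \<otimes>\<^bsub>mod2 C1\<^esub> u (snd b)) \<in> hom (mod2 C0 \<times>\<times> tors2 A0) (mod2 C1)"
    by (rule M1.hom_group_mult)
  moreover have "(\<lambda>b. f (snd b)) \<in> hom (mod2 C0 \<times>\<times> tors2 A0) (tors2 A1)"
    using hom_compose[OF hom_snd_DirProd hom_tors2[OF A0.is_group A1.is_group f]] by (simp add: comp_def)
  ultimately have g: "(\<lambda>(x, a). (mod2_map C0 C1 h x \<otimes>\<^bsub>mod2 C1\<^esub> u a, f a))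
      \<in> hom (mod2 C0 \<times>\<times> tors2 A0) (mod2 C1 \<times>\<times> tors2 A1)"
    by (simp add: case_prod_unfold hom_paired)
  have "u \<one>\<^bsub>A0\<^esub> = \<one>\<^bsub>mod2 C1\<^esub>"
    using hom_one[OF u comm_group.axioms(2)[OF A0.tors2_comm_group] M1.is_group] by simp
  then show ?thesis
    using f h g hom_one[OF h C0.is_group C1.is_group] hom_one[OF f A0.is_group A1.is_group]
      hom_in_carrier[OF h] mod2_map_cls[OF C0.comm_group_axioms C1.comm_group_axioms h] C1.cls_carrier
    by (auto simp: eed_mor_def)
qed

lemma H_mor_id:
  assumes "spp_obj A C"
  shows "eed_mor_eq (H_obj A C) (H_mor C C (spp_id A C)) eed_id"
proof -
  interpret C: comm_group C using assms by (simp add: spp_obj_def)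
  interpret M: comm_group "mod2 C" by (rule C.mod2_comm_group)
  show ?thesis
    using mod2_map_id[OF C.comm_group_axioms] by (auto simp: eed_mor_eq_def spp_id_def eed_id_def)
qed

lemma H_mor_comp:
  assumes "spp_obj A0 C0" "spp_obj A1 C1" "spp_obj A2 C2"
    and m0: "spp_mor A0 C0 A1 C1 (f0, h0, u0)" and m1: "spp_mor A1 C1 A2 C2 (f1, h1, u1)"
  shows "eed_mor_eq (H_obj A0 C0) (H_mor C0 C2 (spp_comp C1 C2 (f0, h0, u0) (f1, h1, u1)))
           (eed_comp (H_mor C0 C1 (f0, h0, u0)) (H_mor C1 C2 (f1, h1, u1)))"
proof -
  interpret A0: comm_group A0 using assms by (simp add: spp_obj_def)
  interpret A1: comm_group A1 using assms by (simp add: spp_obj_def)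
  interpret C0: comm_group C0 using assms by (simp add: spp_obj_def)
  interpret C1: comm_group C1 using assms by (simp add: spp_obj_def)
  interpret C2: comm_group C2 using assms by (simp add: spp_obj_def)
  interpret M2: comm_group "mod2 C2" by (rule C2.mod2_comm_group)
  have f0: "f0 \<in> hom A0 A1" and h0: "h0 \<in> hom C0 C1" and u0: "u0 \<in> hom (tors2 A0) (mod2 C1)"
    and h1: "h1 \<in> hom C1 C2" and u1: "u1 \<in> hom (tors2 A1) (mod2 C2)"
    using m0 m1 by (auto simp: spp_mor_def)
  note mh0 = mod2_map_hom[OF C0.comm_group_axioms C1.comm_group_axioms h0]
  note mh1 = mod2_map_hom[OF C1.comm_group_axioms C2.comm_group_axioms h1]
  have "mod2_map C0 C2 (h1 \<circ> h0) x \<otimes>\<^bsub>mod2 C2\<^esub> (mod2_map C1 C2 h1 (u0 a) \<otimes>\<^bsub>mod2 C2\<^esub> u1 (f0 a))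
      = mod2_map C1 C2 h1 (mod2_map C0 C1 h0 x \<otimes>\<^bsub>mod2 C1\<^esub> u0 a) \<otimes>\<^bsub>mod2 C2\<^esub> u1 (f0 a)"
    if x: "x \<in> carrier (mod2 C0)" and a: "a \<in> two_tors A0" for x a
  proof -
    have "mod2_map C0 C1 h0 x \<in> carrier (mod2 C1)" "u0 a \<in> carrier (mod2 C1)"
      using hom_in_carrier[OF mh0 x] hom_in_carrier[OF u0] a by simp_all
    moreover have "u1 (f0 a) \<in> carrier (mod2 C2)"
      using hom_in_carrier[OF u1] hom_two_tors[OF A0.is_group A1.is_group f0 a] by simp
    ultimately show ?thesis
      using hom_mult[OF mh1] hom_in_carrier[OF mh1]
      by (simp add: M2.m_assoc
          flip: mod2_map_comp[OF C0.comm_group_axioms C1.comm_group_axioms C2.comm_group_axioms h0 h1 x])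
  qed
  then show ?thesis by (auto simp: eed_mor_eq_def spp_comp_def eed_comp_def)
qed

lemma H_mor_faithful:
  assumes "spp_obj A0 C0" "spp_obj A1 C1"
    and m: "spp_mor A0 C0 A1 C1 (f, h, u)" and m': "spp_mor A0 C0 A1 C1 (f', h', u')"
    and eq: "eed_mor_eq (H_obj A0 C0) (H_mor C0 C1 (f, h, u)) (H_mor C0 C1 (f', h', u'))"
  shows "spp_mor_eq A0 C0 (f, h, u) (f', h', u')"
proof -
  interpret C0: comm_group C0 using assms by (simp add: spp_obj_def)
  interpret C1: comm_group C1 using assms by (simp add: spp_obj_def)
  interpret M0: comm_group "mod2 C0" by (rule C0.mod2_comm_group)
  interpret M1: comm_group "mod2 C1" by (rule C1.mod2_comm_group)
  have map_one: "mod2_map C0 C1 k \<one>\<^bsub>mod2 C0\<^esub> = \<one>\<^bsub>mod2 C1\<^esub>" if "k \<in> hom C0 C1" for k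
    using hom_one[OF mod2_map_hom[OF C0.comm_group_axioms C1.comm_group_axioms that] M0.is_group M1.is_group] .
  have h: "h \<in> hom C0 C1" "h' \<in> hom C0 C1"
    and u: "u \<in> hom (tors2 A0) (mod2 C1)" "u' \<in> hom (tors2 A0) (mod2 C1)"
    using m m' by (simp_all add: spp_mor_def)
  have "u a = u' a" if a: "a \<in> two_tors A0" for a
  proof -
    have "mod2_map C0 C1 h \<one>\<^bsub>mod2 C0\<^esub> \<otimes>\<^bsub>mod2 C1\<^esub> u a = mod2_map C0 C1 h' \<one>\<^bsub>mod2 C0\<^esub> \<otimes>\<^bsub>mod2 C1\<^esub> u' a"
      using eq a by (fastforce simp: eed_mor_eq_def)
    then show ?thesis
      using a map_one[OF h(1)] map_one[OF h(2)] hom_in_carrier[OF u(1)] hom_in_carrier[OF u(2)] by simp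
  qed
  then show ?thesis using eq by (simp add: eed_mor_eq_def spp_mor_eq_def)
qed

lemma H_mor_full:
  assumes "spp_obj A0 C0" "spp_obj A1 C1" and M: "eed_mor (H_obj A0 C0) (H_obj A1 C1) (f, g, h)"
  shows "\<exists>m. spp_mor A0 C0 A1 C1 m \<and> eed_mor_eq (H_obj A0 C0) (H_mor C0 C1 m) (f, g, h)"
proof -
  interpret A0: comm_group A0 using assms by (simp add: spp_obj_def)
  interpret C0: comm_group C0 using assms by (simp add: spp_obj_def)
  interpret A1: comm_group A1 using assms by (simp add: spp_obj_def)
  interpret C1: comm_group C1 using assms by (simp add: spp_obj_def)
  interpret M0: comm_group "mod2 C0" by (rule C0.mod2_comm_group)
  interpret M1: comm_group "mod2 C1" by (rule C1.mod2_comm_group)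
  have f: "f \<in> hom A0 A1" and g: "g \<in> hom (mod2 C0 \<times>\<times> tors2 A0) (mod2 C1 \<times>\<times> tors2 A1)"
    and h: "h \<in> hom C0 C1"
    and g_snd: "\<And>b. b \<in> carrier (mod2 C0 \<times>\<times> tors2 A0) \<Longrightarrow> snd (g b) = f (snd b)"
    and g_chi: "\<And>c. c \<in> carrier C0 \<Longrightarrow> g (cls C0 c, \<one>\<^bsub>A0\<^esub>) = (cls C1 (h c), \<one>\<^bsub>A1\<^esub>)"
    using M by (auto simp: eed_mor_def case_prod_beta)
  define u where "u a = fst (g (\<one>\<^bsub>mod2 C0\<^esub>, a))" for a
  have "(\<lambda>a. (\<one>\<^bsub>mod2 C0\<^esub>, a)) \<in> hom (tors2 A0) (mod2 C0 \<times>\<times> tors2 A0)"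
    using trivial_hom[OF M0.is_group, of "tors2 A0"] iso_imp_homomorphism[OF iso_set_refl[of "tors2 A0"]]
    by (simp add: hom_paired)
  then have u: "u \<in> hom (tors2 A0) (mod2 C1)"
    unfolding u_def using hom_compose[OF hom_compose[OF _ g] hom_fst_DirProd] by (simp add: comp_def)
  have "(mod2_map C0 C1 h x \<otimes>\<^bsub>mod2 C1\<^esub> u a, f a) = g (x, a)"
    if x: "x \<in> carrier (mod2 C0)" and a: "a \<in> two_tors A0" for x a
  proof -
    obtain c where c: "c \<in> carrier C0" "x = cls C0 c" using x by (rule mod2_cases)
    have aA: "a \<in> carrier A0" using a by (simp add: two_tors_def)
    have "g (x, a) = g ((x, \<one>\<^bsub>A0\<^esub>) \<otimes>\<^bsub>mod2 C0 \<times>\<times> tors2 A0\<^esub> (\<one>\<^bsub>mod2 C0\<^esub>, a))"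
      using x aA by simp
    also have "\<dots> = g (x, \<one>\<^bsub>A0\<^esub>) \<otimes>\<^bsub>mod2 C1 \<times>\<times> tors2 A1\<^esub> g (\<one>\<^bsub>mod2 C0\<^esub>, a)"
      using x a by (intro hom_mult[OF g]) (auto simp: two_tors_def)
    also have "g (\<one>\<^bsub>mod2 C0\<^esub>, a) = (u a, f a)"
      using g_snd[of "(\<one>\<^bsub>mod2 C0\<^esub>, a)"] a by (simp add: u_def prod_eq_iff)
    finally show ?thesis
      using c g_chi hom_in_carrier[OF f aA]
        mod2_map_cls[OF C0.comm_group_axioms C1.comm_group_axioms h] by simp
  qed
  then have "eed_mor_eq (H_obj A0 C0) (H_mor C0 C1 (f, h, u)) (f, g, h)"
    by (auto simp: eed_mor_eq_def)
  moreover have "spp_mor A0 C0 A1 C1 (f, h, u)" using f h u by (simp add: spp_mor_def)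
  ultimately show ?thesis by blast
qed

section \<open>Exact diagrams with \<open>\<eta> = 0\<close> split\<close>

lemma eed_mor_inverse:
  assumes D: "ext_eta_diagram D" and m: "eed_mor D D' (f, g, h)"
    and f: "group_isomorphisms (dA D) (dA D') f f'"
    and g: "group_isomorphisms (dB D) (dB D') g g'"
    and h: "group_isomorphisms (dC D) (dC D') h h'"
  shows "eed_mor D' D (f', g', h')"
    and "eed_mor_eq D (eed_comp (f, g, h) (f', g', h')) eed_id"
    and "eed_mor_eq D' (eed_comp (f', g', h') (f, g, h)) eed_id"
proof -
  have in_carrier: "\<And>b. b \<in> carrier (dB D) \<Longrightarrow> psi D b \<in> carrier (dA D)"
    "\<And>a. a \<in> carrier (dA D) \<Longrightarrow> eta D a \<in> carrier (dC D)"
    "\<And>c. c \<in> carrier (dC D) \<Longrightarrow> chi D c \<in> carrier (dB D)"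
    using D by (auto simp: ext_eta_diagram_def intro: hom_in_carrier)
  have "f' (psi D' b) = psi D (g' b)" if "b \<in> carrier (dB D')" for b
  proof -
    have "g' b \<in> carrier (dB D)" "g (g' b) = b"
      using g that by (auto simp: group_isomorphisms_def intro: hom_in_carrier)
    then have "psi D' b = f (psi D (g' b))" using m by (auto simp: eed_mor_def)
    then show ?thesis using f in_carrier \<open>g' b \<in> carrier (dB D)\<close> by (simp add: group_isomorphisms_def)
  qed
  moreover have "h' (eta D' a) = eta D (f' a)" if "a \<in> carrier (dA D')" for a
  proof -
    have "f' a \<in> carrier (dA D)" "f (f' a) = a"
      using f that by (auto simp: group_isomorphisms_def intro: hom_in_carrier)
    then have "eta D' a = h (eta D (f' a))" using m by (auto simp: eed_mor_def)
    then show ?thesis using h in_carrier \<open>f' a \<in> carrier (dA D)\<close> by (simp add: group_isomorphisms_def)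
  qed
  moreover have "g' (chi D' c) = chi D (h' c)" if "c \<in> carrier (dC D')" for c
  proof -
    have "h' c \<in> carrier (dC D)" "h (h' c) = c"
      using h that by (auto simp: group_isomorphisms_def intro: hom_in_carrier)
    then have "chi D' c = g (chi D (h' c))" using m by (auto simp: eed_mor_def)
    then show ?thesis using g in_carrier \<open>h' c \<in> carrier (dC D)\<close> by (simp add: group_isomorphisms_def)
  qed
  ultimately show "eed_mor D' D (f', g', h')"
    using f g h by (simp add: eed_mor_def group_isomorphisms_def)
  show "eed_mor_eq D (eed_comp (f, g, h) (f', g', h')) eed_id"
    and "eed_mor_eq D' (eed_comp (f', g', h') (f, g, h)) eed_id"
    using f g h by (simp_all add: eed_mor_eq_def eed_comp_def eed_id_def group_isomorphisms_def)
qed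

locale eta_zero_exact =
  fixes D :: "('a, 'b, 'c) eed"
  assumes exact: "exact_eed D"
    and eta_zero: "\<forall>a\<in>carrier (dA D). eta D a = \<one>\<^bsub>dC D\<^esub>"
begin

lemma eta_diagram: "ext_eta_diagram D"
  using exact by (simp add: exact_eed_def)

sublocale A: comm_group "dA D" using eta_diagram by (simp add: ext_eta_diagram_def)
sublocale B: comm_group "dB D" using eta_diagram by (simp add: ext_eta_diagram_def)
sublocale C: comm_group "dC D" using eta_diagram by (simp add: ext_eta_diagram_def)
sublocale M: comm_group "mod2 (dC D)" by (rule C.mod2_comm_group)
sublocale T: comm_group "tors2 (dA D)" by (rule A.tors2_comm_group)

lemma group_H_B: "group (mod2 (dC D) \<times>\<times> tors2 (dA D))"
  by (rule DirProd_group[OF M.is_group T.is_group])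

lemma psi_hom: "psi D \<in> hom (dB D) (dA D)"
  and chi_hom: "chi D \<in> hom (dC D) (dB D)"
  and psi_chi: "c \<in> carrier (dC D) \<Longrightarrow> psi D (chi D c) = \<one>\<^bsub>dA D\<^esub>"
  and ker_psi: "chi D ` carrier (dC D) = {b \<in> carrier (dB D). psi D b = \<one>\<^bsub>dA D\<^esub>}"
  and ker_chi: "c \<in> carrier (dC D) \<Longrightarrow> chi D c = \<one>\<^bsub>dB D\<^esub> \<Longrightarrow> c \<in> twice (dC D)"
  and psi_onto: "psi D ` carrier (dB D) = two_tors (dA D)"
  using exact by (auto simp: exact_eed_def ext_eta_diagram_def)

lemma B_square: "b \<in> carrier (dB D) \<Longrightarrow> b \<otimes>\<^bsub>dB D\<^esub> b = \<one>\<^bsub>dB D\<^esub>"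
  using eta_diagram eta_zero hom_in_carrier[OF psi_hom] hom_one[OF chi_hom C.is_group B.is_group]
  by (simp add: ext_eta_diagram_def)

lemma chi_twice: "\<forall>t\<in>twice (dC D). chi D t = \<one>\<^bsub>dB D\<^esub>"
  using hom_mult[OF chi_hom] hom_in_carrier[OF chi_hom] B_square by (auto simp: twice_def)

definition psi_section :: "'a \<Rightarrow> 'b" where
  "psi_section = (SOME s. s \<in> hom (tors2 (dA D)) (dB D) \<and> (\<forall>a\<in>two_tors (dA D). psi D (s a) = a))"

lemma psi_section_hom: "psi_section \<in> hom (tors2 (dA D)) (dB D)"
  and psi_psi_section: "a \<in> two_tors (dA D) \<Longrightarrow> psi D (psi_section a) = a"
proof -
  have "psi D \<in> hom (dB D) (tors2 (dA D))"
    using psi_hom psi_onto by (auto simp: hom_def)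
  then obtain s where "s \<in> hom (tors2 (dA D)) (dB D)" "\<forall>a\<in>two_tors (dA D). psi D (s a) = a"
    using B.exponent2_epi_section[OF B_square T.is_group] psi_onto
    by (metis carrier_tors2)
  then have "\<exists>s. s \<in> hom (tors2 (dA D)) (dB D) \<and> (\<forall>a\<in>two_tors (dA D). psi D (s a) = a)"
    by blast
  then have "psi_section \<in> hom (tors2 (dA D)) (dB D) \<and> (\<forall>a\<in>two_tors (dA D). psi D (psi_section a) = a)"
    unfolding psi_section_def by (rule someI_ex)
  then show "psi_section \<in> hom (tors2 (dA D)) (dB D)" "a \<in> two_tors (dA D) \<Longrightarrow> psi D (psi_section a) = a"
    by blast+
qed

definition splitting :: "'c set \<times> 'a \<Rightarrow> 'b" where
  "splitting = (\<lambda>(x, a). mod2_lift (chi D) x \<otimes>\<^bsub>dB D\<^esub> psi_section a)"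

lemma splitting_cls: "c \<in> carrier (dC D) \<Longrightarrow> splitting (cls (dC D) c, a) = chi D c \<otimes>\<^bsub>dB D\<^esub> psi_section a"
  by (simp add: splitting_def mod2_lift_cls[OF C.comm_group_axioms B.is_group chi_hom chi_twice])

lemma splitting_hom: "splitting \<in> hom (mod2 (dC D) \<times>\<times> tors2 (dA D)) (dB D)"
proof -
  have "(\<lambda>y. mod2_lift (chi D) (fst y)) \<in> hom (mod2 (dC D) \<times>\<times> tors2 (dA D)) (dB D)"
    using hom_compose[OF hom_fst_DirProd mod2_lift_hom[OF C.comm_group_axioms B.is_group chi_hom chi_twice]]
    by (simp add: comp_def)
  moreover have "(\<lambda>y. psi_section (snd y)) \<in> hom (mod2 (dC D) \<times>\<times> tors2 (dA D)) (dB D)"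
    using hom_compose[OF hom_snd_DirProd psi_section_hom] by (simp add: comp_def)
  ultimately show ?thesis
    unfolding splitting_def case_prod_unfold by (rule B.hom_group_mult)
qed

lemma psi_section_one: "psi_section \<one>\<^bsub>dA D\<^esub> = \<one>\<^bsub>dB D\<^esub>"
  using hom_one[OF psi_section_hom T.is_group B.is_group] by simp

lemma psi_splitting:
  assumes "y \<in> carrier (mod2 (dC D) \<times>\<times> tors2 (dA D))"
  shows "psi D (splitting y) = snd y"
proof -
  obtain x a where y: "y = (x, a)" "x \<in> carrier (mod2 (dC D))" "a \<in> two_tors (dA D)"
    using assms by auto
  then obtain c where c: "c \<in> carrier (dC D)" "x = cls (dC D) c" by (metis mod2_cases)
  have "psi D (chi D c \<otimes>\<^bsub>dB D\<^esub> psi_section a) = psi D (chi D c) \<otimes>\<^bsub>dA D\<^esub> psi D (psi_section a)"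
    using c y hom_in_carrier[OF chi_hom] hom_in_carrier[OF psi_section_hom] by (simp add: hom_mult[OF psi_hom])
  then show ?thesis
    using y c psi_chi psi_psi_section by (simp add: splitting_cls two_tors_def)
qed

lemma splitting_kernel:
  "kernel (mod2 (dC D) \<times>\<times> tors2 (dA D)) (dB D) splitting = {\<one>\<^bsub>mod2 (dC D) \<times>\<times> tors2 (dA D)\<^esub>}"
proof -
  have kernel_one: "y = (\<one>\<^bsub>mod2 (dC D)\<^esub>, \<one>\<^bsub>dA D\<^esub>)"
    if y: "y \<in> carrier (mod2 (dC D) \<times>\<times> tors2 (dA D))" and split: "splitting y = \<one>\<^bsub>dB D\<^esub>" for y
  proof -
    obtain x a where xa: "y = (x, a)" "x \<in> carrier (mod2 (dC D))" using y by auto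
    then obtain c where c: "c \<in> carrier (dC D)" "x = cls (dC D) c" by (metis mod2_cases)
    have "a = \<one>\<^bsub>dA D\<^esub>" using psi_splitting[OF y] split xa hom_one[OF psi_hom B.is_group A.is_group] by simp
    then have "chi D c = \<one>\<^bsub>dB D\<^esub>"
      using split xa c hom_in_carrier[OF chi_hom] by (simp add: splitting_cls psi_section_one)
    then have "c \<in> twice (dC D)" using ker_chi c(1) by simp
    then have "x = \<one>\<^bsub>mod2 (dC D)\<^esub>" using c C.cls_eq_one_iff by simp
    with xa \<open>a = \<one>\<^bsub>dA D\<^esub>\<close> show ?thesis by simp
  qed
  moreover have "splitting \<one>\<^bsub>mod2 (dC D) \<times>\<times> tors2 (dA D)\<^esub> = \<one>\<^bsub>dB D\<^esub>"
    using hom_one[OF splitting_hom group_H_B B.is_group] .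
  ultimately show ?thesis
  proof (intro equalityI subsetI)
    fix y assume "y \<in> kernel (mod2 (dC D) \<times>\<times> tors2 (dA D)) (dB D) splitting"
    then have "y \<in> carrier (mod2 (dC D) \<times>\<times> tors2 (dA D))" "splitting y = \<one>\<^bsub>dB D\<^esub>"
      by (simp_all add: kernel_def)
    with kernel_one show "y \<in> {\<one>\<^bsub>mod2 (dC D) \<times>\<times> tors2 (dA D)\<^esub>}" by simp
  qed (simp add: kernel_def two_tors_def)
qed

lemma splitting_onto: "splitting ` carrier (mod2 (dC D) \<times>\<times> tors2 (dA D)) = carrier (dB D)"
proof
  show "splitting ` carrier (mod2 (dC D) \<times>\<times> tors2 (dA D)) \<subseteq> carrier (dB D)"
    using hom_in_carrier[OF splitting_hom] by (rule image_subsetI)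
  show "carrier (dB D) \<subseteq> splitting ` carrier (mod2 (dC D) \<times>\<times> tors2 (dA D))"
  proof
    fix b assume b: "b \<in> carrier (dB D)"
    define a where "a = psi D b"
    have a: "a \<in> two_tors (dA D)" using b unfolding a_def psi_onto[symmetric] by (rule imageI)
    have s: "psi_section a \<in> carrier (dB D)" using hom_in_carrier[OF psi_section_hom] a by simp
    have "psi D (b \<otimes>\<^bsub>dB D\<^esub> psi_section a) = a \<otimes>\<^bsub>dA D\<^esub> a"
      using b s a psi_psi_section by (simp add: hom_mult[OF psi_hom] a_def)
    also have "\<dots> = \<one>\<^bsub>dA D\<^esub>" using a by (simp add: two_tors_def)
    finally have "b \<otimes>\<^bsub>dB D\<^esub> psi_section a \<in> chi D ` carrier (dC D)"
      unfolding ker_psi using b s by simp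
    then obtain c where c: "b \<otimes>\<^bsub>dB D\<^esub> psi_section a = chi D c" "c \<in> carrier (dC D)"
      by (rule imageE)
    have "splitting (cls (dC D) c, a) = b \<otimes>\<^bsub>dB D\<^esub> (psi_section a \<otimes>\<^bsub>dB D\<^esub> psi_section a)"
      using c b s by (simp add: splitting_cls B.m_assoc flip: c(1))
    also have "\<dots> = b" using B_square[OF s] b by simp
    finally have "b = splitting (cls (dC D) c, a)" ..
    moreover have "(cls (dC D) c, a) \<in> carrier (mod2 (dC D) \<times>\<times> tors2 (dA D))"
      using c a C.cls_carrier by simp
    ultimately show "b \<in> splitting ` carrier (mod2 (dC D) \<times>\<times> tors2 (dA D))"
      by (rule image_eqI)
  qed
qed

lemma splitting_iso: "splitting \<in> iso (mod2 (dC D) \<times>\<times> tors2 (dA D)) (dB D)"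
proof -
  interpret split: group_hom "mod2 (dC D) \<times>\<times> tors2 (dA D)" "dB D" splitting
    by (simp add: group_hom_def group_hom_axioms_def splitting_hom B.is_group group_H_B)
  show ?thesis
    using splitting_hom splitting_onto split.inj_iff_trivial_ker splitting_kernel by (simp add: iso_iff)
qed

lemma eed_mor_splitting: "eed_mor (H_obj (dA D) (dC D)) D (id, splitting, id)"
proof -
  have "\<forall>y\<in>carrier (mod2 (dC D) \<times>\<times> tors2 (dA D)). snd y = psi D (splitting y)"
    using psi_splitting by simp
  moreover have "\<forall>c\<in>carrier (dC D). splitting (cls (dC D) c, \<one>\<^bsub>dA D\<^esub>) = chi D c"
    using hom_in_carrier[OF chi_hom] by (simp add: splitting_cls psi_section_one)
  ultimately show ?thesis
    using splitting_hom eta_zero iso_imp_homomorphism[OF id_iso[of "dA D"]]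
      iso_imp_homomorphism[OF id_iso[of "dC D"]]
    by (simp add: eed_mor_def case_prod_beta)
qed

lemma H_essentially_surjective:
  "\<exists>(A :: 'a monoid) (C :: 'c monoid) F G. spp_obj A C \<and> eed_mor (H_obj A C) D F \<and> eed_mor D (H_obj A C) G \<and>
     eed_mor_eq (H_obj A C) (eed_comp F G) eed_id \<and> eed_mor_eq D (eed_comp G F) eed_id"
proof -
  let ?H = "H_obj (dA D) (dC D)"
  have H: "ext_eta_diagram ?H"
    using exact_H_obj[of "dA D" "dC D"] A.comm_group_axioms C.comm_group_axioms
    by (simp add: spp_obj_def exact_eed_def)
  have "\<exists>g. group_isomorphisms (dB ?H) (dB D) splitting g"
    using splitting_iso by (simp add: group.iso_iff_group_isomorphisms[OF group_H_B])
  then obtain splitting' where B: "group_isomorphisms (dB ?H) (dB D) splitting splitting'" ..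
  have A: "group_isomorphisms (dA ?H) (dA D) id id" and C: "group_isomorphisms (dC ?H) (dC D) id id"
    using iso_imp_homomorphism[OF id_iso[of "dA D"]] iso_imp_homomorphism[OF id_iso[of "dC D"]]
    by (simp_all add: group_isomorphisms_def)
  note inverse = eed_mor_inverse[OF H eed_mor_splitting A B C]
  show ?thesis
    unfolding spp_obj_def
    by (rule exI[of _ "dA D"], rule exI[of _ "dC D"], intro exI conjI)
      (fact A.comm_group_axioms C.comm_group_axioms eed_mor_splitting inverse)+
qed

end

theorem proposition3p17:
  shows
  \<comment> \<open>H is well defined on objects, landing in exact diagrams with eta = 0\<close>
  "(\<forall>(A :: 'a monoid) (C :: 'c monoid). spp_obj A C \<longrightarrow>
       exact_eed (H_obj A C) \<and> (\<forall>a \<in> carrier A. eta (H_obj A C) a = \<one>\<^bsub>C\<^esub>)) \<and>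
   \<comment> \<open>H is well defined on morphisms\<close>
   (\<forall>(A0 :: 'a monoid) (C0 :: 'c monoid) (A1 :: 'a1 monoid) (C1 :: 'c1 monoid) m.
       spp_obj A0 C0 \<and> spp_obj A1 C1 \<and> spp_mor A0 C0 A1 C1 m \<longrightarrow>
       eed_mor (H_obj A0 C0) (H_obj A1 C1) (H_mor C0 C1 m)) \<and>
   \<comment> \<open>H preserves identities\<close>
   (\<forall>(A :: 'a monoid) (C :: 'c monoid). spp_obj A C \<longrightarrow>
       eed_mor_eq (H_obj A C) (H_mor C C (spp_id A C)) eed_id) \<and>
   \<comment> \<open>H preserves composition\<close>
   (\<forall>(A0 :: 'a monoid) (C0 :: 'c monoid) (A1 :: 'a1 monoid) (C1 :: 'c1 monoid)
      (A2 :: 'a2 monoid) (C2 :: 'c2 monoid) m0 m1.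
       spp_obj A0 C0 \<and> spp_obj A1 C1 \<and> spp_obj A2 C2 \<and>
       spp_mor A0 C0 A1 C1 m0 \<and> spp_mor A1 C1 A2 C2 m1 \<longrightarrow>
       eed_mor_eq (H_obj A0 C0) (H_mor C0 C2 (spp_comp C1 C2 m0 m1))
         (eed_comp (H_mor C0 C1 m0) (H_mor C1 C2 m1))) \<and>
   \<comment> \<open>H is faithful\<close>
   (\<forall>(A0 :: 'a monoid) (C0 :: 'c monoid) (A1 :: 'a1 monoid) (C1 :: 'c1 monoid) m m'.
       spp_obj A0 C0 \<and> spp_obj A1 C1 \<and> spp_mor A0 C0 A1 C1 m \<and> spp_mor A0 C0 A1 C1 m' \<and>
       eed_mor_eq (H_obj A0 C0) (H_mor C0 C1 m) (H_mor C0 C1 m') \<longrightarrow>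
       spp_mor_eq A0 C0 m m') \<and>
   \<comment> \<open>H is full\<close>
   (\<forall>(A0 :: 'a monoid) (C0 :: 'c monoid) (A1 :: 'a1 monoid) (C1 :: 'c1 monoid) M.
       spp_obj A0 C0 \<and> spp_obj A1 C1 \<and> eed_mor (H_obj A0 C0) (H_obj A1 C1) M \<longrightarrow>
       (\<exists>m. spp_mor A0 C0 A1 C1 m \<and> eed_mor_eq (H_obj A0 C0) (H_mor C0 C1 m) M)) \<and>
   \<comment> \<open>H is essentially surjective onto exact diagrams with eta = 0\<close>
   (\<forall>D :: ('a, 'b, 'c) eed.
       exact_eed D \<and> (\<forall>a \<in> carrier (dA D). eta D a = \<one>\<^bsub>dC D\<^esub>) \<longrightarrow>
       (\<exists>(A :: 'a monoid) (C :: 'c monoid) F G.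
          spp_obj A C \<and> eed_mor (H_obj A C) D F \<and> eed_mor D (H_obj A C) G \<and>
          eed_mor_eq (H_obj A C) (eed_comp F G) eed_id \<and> eed_mor_eq D (eed_comp G F) eed_id))"
  apply (intro conjI allI impI; (elim conjE)?)
  subgoal by (rule exact_H_obj)
  subgoal by simp
  subgoal for A0 C0 A1 C1 m by (cases m rule: prod_cases3) (blast intro: eed_mor_H_mor)
  subgoal by (rule H_mor_id)
  subgoal for A0 C0 A1 C1 A2 C2 m0 m1
    by (cases m0 rule: prod_cases3, cases m1 rule: prod_cases3) (blast intro: H_mor_comp)
  subgoal for A0 C0 A1 C1 m m'
    by (cases m rule: prod_cases3, cases m' rule: prod_cases3) (blast intro: H_mor_faithful)
  subgoal for A0 C0 A1 C1 M by (cases M rule: prod_cases3) (blast intro: H_mor_full)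
  subgoal by (intro eta_zero_exact.H_essentially_surjective eta_zero_exact.intro)
  done

end
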